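(* Fix an arbitrary integer load vector $x^{(0)}$ with discrepancy at most $K$, and a sequence of matchings. Consider two rounds $t_1 \leq t_2$ and assume that the time-interval $[0,t_1]$ is $(K,1/(2n))$-smoothing. Then for any node $k\in V$ and $\delta>1/n$, \[ \Pr\left[ \left|\sum_{w\in V} x_w^{(t_1)} \mathbf{M}^{[t_1+1,t_2]}_{w,k} - \overline{x} \right|\geq\delta \right]\leq2 \exp\left( -\frac{(\delta - 1/(2n) )^2}{4 \sum_{w\in V} \left( \mathbf{M}^{[t_1+1,t_2]}_{w,k} -1/n\right)^2}\right). \] In particular, for any node $w\in V$ and $\delta>1/n$, \[ \Pr\left[ \left|x_w^{(t_1)} - \overline{x} \right|\geq\delta \right]\leq2 \exp\left( -\left(\delta - \tfrac{1}{2n} \right)^2\big/ 4 \right). \]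
   Context: $G=(V,E)$ has $n$ nodes. A matching $\mathbf{M}^{(t)}\subseteq E$ is identified with the symmetric matrix with entries $1/2$ on $(u,u),(v,v),(u,v),(v,u)$ for $\{u,v\}\in\mathbf{M}^{(t)}$, $1$ on the diagonal for unmatched nodes, $0$ elsewhere; $\mathbf{M}^{[a,b]}=\prod_{s=a}^b\mathbf{M}^{(s)}$ (identity if $a>b$). Discrete protocol: in round $t$, for each $\{u,v\}\in\mathbf{M}^{(t)}$ both nodes get $\lfloor (x^{(t-1)}_u+x^{(t-1)}_v)/2\rfloor$ tokens and an excess token (if the sum is odd) goes to $u$ or $v$ with probability $1/2$ each, independently; unmatched nodes keep their load. $\overline{x}=\frac1n\sum_w x^{(0)}_w$. The continuous process is $\xi^{(t)}=\xi^{(t-1)}\mathbf{M}^{(t)}$. The interval $[t_1,t_2]$ is $(K,\epsilon)$-smoothing if every $\xi^{(t_1)}\in\mathbb{R}^n$ with discrepancy $\max_{u,v}|\xi_u-\xi_v|\le K$ yields $\xi^{(t_2)}$ with discrepancy at most $\epsilon$. Probabilities are over the random orientations. *)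

theory Defs
  imports "HOL-Probability.Probability"
begin

text \<open>Nodes are the elements of a finite type 'v; n = CARD('v).
  A matching in round t is given as a set of ordered pairs (u,v); the pair (u,v)
  represents the edge {u,v}, and the order only serves to index the random
  orientation bit of that edge.\<close>

definition is_matching :: "('v \<times> 'v) set \<Rightarrow> ('v \<times> 'v) set \<Rightarrow> bool" where
  "is_matching E Mt \<longleftrightarrow> Mt \<subseteq> E \<and> (\<forall>(u,v)\<in>Mt. u \<noteq> v) \<and>
     (\<forall>(u,v)\<in>Mt. \<forall>(u',v')\<in>Mt. {u,v} \<inter> {u',v'} \<noteq> {} \<longrightarrow> (u,v) = (u',v'))"

definition is_graph :: "('v \<times> 'v) set \<Rightarrow> bool" where
  "is_graph E \<longleftrightarrow> (\<forall>(u,v)\<in>E. u \<noteq> v \<and> (v,u) \<in> E)"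

definition matched :: "('v \<times> 'v) set \<Rightarrow> 'v \<Rightarrow> bool" where
  "matched Mt u \<longleftrightarrow> (\<exists>v. (u,v) \<in> Mt \<or> (v,u) \<in> Mt)"

definition Mmat :: "(nat \<Rightarrow> ('v \<times> 'v) set) \<Rightarrow> nat \<Rightarrow> 'v \<Rightarrow> 'v \<Rightarrow> real" where
  "Mmat M t u v =
     (if u = v then (if matched (M t) u then 1/2 else 1)
      else if (u,v) \<in> M t \<or> (v,u) \<in> M t then 1/2 else 0)"

definition idm :: "'v \<Rightarrow> 'v \<Rightarrow> real" where
  "idm u v = (if u = v then 1 else 0)"

definition matmul :: "('v::finite \<Rightarrow> 'v \<Rightarrow> real) \<Rightarrow> ('v \<Rightarrow> 'v \<Rightarrow> real) \<Rightarrow> 'v \<Rightarrow> 'v \<Rightarrow> real" where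
  "matmul A B i j = (\<Sum>k\<in>UNIV. A i k * B k j)"

text \<open>M^[a,b] = M^(a) M^(a+1) ... M^(b); identity if a > b.\<close>
definition Mprod :: "(nat \<Rightarrow> ('v::finite \<times> 'v) set) \<Rightarrow> nat \<Rightarrow> nat \<Rightarrow> 'v \<Rightarrow> 'v \<Rightarrow> real" where
  "Mprod M a b = foldl (\<lambda>A s. matmul A (Mmat M s)) idm [a..<Suc b]"

definition vecmat :: "('v::finite \<Rightarrow> real) \<Rightarrow> ('v \<Rightarrow> 'v \<Rightarrow> real) \<Rightarrow> 'v \<Rightarrow> real" where
  "vecmat xi A v = (\<Sum>u\<in>UNIV. xi u * A u v)"

definition discrepancy :: "('v::finite \<Rightarrow> real) \<Rightarrow> real" where
  "discrepancy xi = Max {\<bar>xi u - xi v\<bar> | u v. True}"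

text \<open>[t1,t2] is (K,eps)-smoothing: xi^(t2) = xi^(t1) M^[t1+1,t2].\<close>
definition smoothing :: "(nat \<Rightarrow> ('v::finite \<times> 'v) set) \<Rightarrow> real \<Rightarrow> real \<Rightarrow> nat \<Rightarrow> nat \<Rightarrow> bool" where
  "smoothing M K eps t1 t2 \<longleftrightarrow>
     (\<forall>xi. discrepancy xi \<le> K \<longrightarrow> discrepancy (vecmat xi (Mprod M (Suc t1) t2)) \<le> eps)"

text \<open>Discrete step in round t with orientation bits b: for an edge (u,v) in M t the
  excess token goes to u if b (t,u) and to v otherwise. Floor of s/2 is s div 2.\<close>
definition disc_step :: "(nat \<Rightarrow> ('v \<times> 'v) set) \<Rightarrow> nat \<Rightarrow> (nat \<times> 'v \<Rightarrow> bool) \<Rightarrow> ('v \<Rightarrow> int) \<Rightarrow> 'v \<Rightarrow> int" where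
  "disc_step M t b x w =
     (if \<exists>v. (w,v) \<in> M t then
        (let v = (THE v. (w,v) \<in> M t); s = x w + x v in s div 2 + (if odd s \<and> b (t,w) then 1 else 0))
      else if \<exists>u. (u,w) \<in> M t then
        (let u = (THE u. (u,w) \<in> M t); s = x u + x w in s div 2 + (if odd s \<and> \<not> b (t,u) then 1 else 0))
      else x w)"

primrec load :: "(nat \<Rightarrow> ('v \<times> 'v) set) \<Rightarrow> (nat \<times> 'v \<Rightarrow> bool) \<Rightarrow> ('v \<Rightarrow> int) \<Rightarrow> nat \<Rightarrow> 'v \<Rightarrow> int" where
  "load M b x0 0 = x0"
| "load M b x0 (Suc t) = disc_step M (Suc t) b (load M b x0 t)"

text \<open>Independent fair orientation bits for rounds 1..T (one per edge, indexed by the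
  first component of the edge; bits at other indices are irrelevant).\<close>
definition orient_pmf :: "nat \<Rightarrow> (nat \<times> 'v::finite \<Rightarrow> bool) pmf" where
  "orient_pmf T = Pi_pmf ({1..T} \<times> UNIV) False (\<lambda>_. bernoulli_pmf (1/2))"

end

theory Submission
  imports Defs
begin

text \<open>Fix the target node k and the final round t2, and let
  Z(T) = sum_w x_w^(T) M^[T+1,t2]_{w,k}. Since M^(T+1) averages the loads of matched pairs,
  Z(T+1) - Z(T) collects only the rounding errors of round T+1: every matched edge (u,v)
  contributes a fair sign times 1/2 (if the pair sum is odd) times the gap
  M^[T+2,t2]_{u,k} - M^[T+2,t2]_{v,k}. Hoeffding's bound cosh x <= exp (x^2/2), applied edge by
  edge and round by round, bounds E exp (l (Z(t1) - Z(0))) by exp (l^2 V / 8), where V is the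
  sum of the squared gaps. The same squared gaps are exactly
  what the continuous process dissipates, round by round, from
  S = sum_w (M^[t1+1,t2]_{w,k} - 1/n)^2, so V <= 2 S and a Chernoff bound gives the tail
  estimate for Z(t1) - Z(0). Finally Z(0) is the continuous load after t1 rounds averaged with
  the weights M^[t1+1,t2]_{.,k}, hence within 1/(2n) of the mean by the smoothing hypothesis.
  For t2 = t1 the matrix product is the identity and S = 1 - 1/n <= 1.\<close>

section \<open>Matchings\<close>

definition fst_matched :: "('v \<times> 'v) set \<Rightarrow> 'v \<Rightarrow> bool" where
  "fst_matched Mt u \<longleftrightarrow> (\<exists>v. (u,v) \<in> Mt)"

definition snd_matched :: "('v \<times> 'v) set \<Rightarrow> 'v \<Rightarrow> bool" where
  "snd_matched Mt u \<longleftrightarrow> (\<exists>v. (v,u) \<in> Mt)"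

definition partner :: "('v \<times> 'v) set \<Rightarrow> 'v \<Rightarrow> 'v" where
  "partner Mt w = (if \<exists>v. (w,v) \<in> Mt then (THE v. (w,v) \<in> Mt)
     else if \<exists>u. (u,w) \<in> Mt then (THE u. (u,w) \<in> Mt) else w)"

definition match_avg :: "('v \<times> 'v) set \<Rightarrow> ('v \<Rightarrow> real) \<Rightarrow> 'v \<Rightarrow> real" where
  "match_avg Mt f w = (if matched Mt w then (f w + f (partner Mt w)) / 2 else f w)"

context
  fixes E Mt :: "('v \<times> 'v) set"
  assumes matching: "is_matching E Mt"
begin

lemma matching_edge_neq: "(u,v) \<in> Mt \<Longrightarrow> u \<noteq> v"
  using matching unfolding is_matching_def by auto

lemma matching_edges_eq:
  assumes "(u,v) \<in> Mt" "(u',v') \<in> Mt" "{u,v} \<inter> {u',v'} \<noteq> {}"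
  shows "u = u' \<and> v = v'"
proof -
  have "\<forall>p\<in>Mt. \<forall>q\<in>Mt. {fst p, snd p} \<inter> {fst q, snd q} \<noteq> {} \<longrightarrow> p = q"
    using matching unfolding is_matching_def split_def by (elim conjE) (simp only: prod.collapse)
  then show ?thesis using assms by (metis fst_conv snd_conv prod.inject)
qed

lemma matching_fst_unique: "(u,v) \<in> Mt \<Longrightarrow> (u,v') \<in> Mt \<Longrightarrow> v = v'"
  using matching_edges_eq[of u v u v'] by blast

lemma matching_snd_unique: "(u,v) \<in> Mt \<Longrightarrow> (u',v) \<in> Mt \<Longrightarrow> u = u'"
  using matching_edges_eq[of u v u' v] by blast

lemma matching_not_fst_and_snd: "(u,v) \<in> Mt \<Longrightarrow> (w,u) \<notin> Mt"
  using matching_edges_eq[of u v w u] matching_edge_neq[of u v] by blast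

lemma partner_of_fst: "(u,v) \<in> Mt \<Longrightarrow> partner Mt u = v"
  unfolding partner_def using matching_fst_unique by (auto intro!: the_equality)

lemma partner_of_snd: "(u,v) \<in> Mt \<Longrightarrow> partner Mt v = u"
proof -
  assume uv: "(u,v) \<in> Mt"
  then have "\<not> (\<exists>x. (v,x) \<in> Mt)" using matching_not_fst_and_snd by blast
  moreover have "(THE x. (x,v) \<in> Mt) = u"
    using uv matching_snd_unique by (intro the_equality) blast+
  ultimately show ?thesis unfolding partner_def using uv by auto
qed

lemma fst_matched_partner: "fst_matched Mt u \<Longrightarrow> (u, partner Mt u) \<in> Mt"
  unfolding fst_matched_def using partner_of_fst by blast

lemma snd_matched_partner: "snd_matched Mt u \<Longrightarrow> (partner Mt u, u) \<in> Mt"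
  unfolding snd_matched_def using partner_of_snd by blast

lemma fst_matched_not_snd_matched: "fst_matched Mt u \<Longrightarrow> \<not> snd_matched Mt u"
  unfolding fst_matched_def snd_matched_def using matching_not_fst_and_snd by blast

lemma matched_iff_fst_or_snd: "matched Mt u \<longleftrightarrow> fst_matched Mt u \<or> snd_matched Mt u"
  unfolding matched_def fst_matched_def snd_matched_def by blast

lemma partner_unmatched: "\<not> matched Mt w \<Longrightarrow> partner Mt w = w"
  unfolding partner_def matched_def by auto

lemma partner_partner: "partner Mt (partner Mt w) = w"
proof -
  consider "fst_matched Mt w" | "snd_matched Mt w" | "\<not> matched Mt w"
    using matched_iff_fst_or_snd by blast
  then show ?thesis
  proof cases
    case 1
    then show ?thesis using fst_matched_partner partner_of_snd by blast
  next
    case 2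
    then show ?thesis using snd_matched_partner partner_of_fst by blast
  next
    case 3
    then show ?thesis using partner_unmatched by simp
  qed
qed

lemma snd_matched_partner_iff: "snd_matched Mt (partner Mt u) \<longleftrightarrow> fst_matched Mt u"
proof
  assume "snd_matched Mt (partner Mt u)"
  then have "(u, partner Mt u) \<in> Mt"
    using snd_matched_partner[of "partner Mt u"] by (simp only: partner_partner)
  then show "fst_matched Mt u" unfolding fst_matched_def by blast
next
  assume "fst_matched Mt u"
  then show "snd_matched Mt (partner Mt u)"
    using fst_matched_partner unfolding snd_matched_def by blast
qed

lemma fst_matched_partner_iff: "fst_matched Mt (partner Mt u) \<longleftrightarrow> snd_matched Mt u"
  using snd_matched_partner_iff[of "partner Mt u"] by (simp add: partner_partner)

lemma matched_partner_iff: "matched Mt (partner Mt u) \<longleftrightarrow> matched Mt u"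
  using matched_iff_fst_or_snd fst_matched_partner_iff snd_matched_partner_iff by blast

lemma partner_neq: "matched Mt u \<Longrightarrow> partner Mt u \<noteq> u"
  using fst_matched_partner[of u] snd_matched_partner[of u] matching_edge_neq
  unfolding matched_iff_fst_or_snd by fastforce

lemma matching_edge_iff_partner:
  "u \<noteq> v \<Longrightarrow> ((u,v) \<in> Mt \<or> (v,u) \<in> Mt) \<longleftrightarrow> matched Mt u \<and> v = partner Mt u"
proof
  show "(u,v) \<in> Mt \<or> (v,u) \<in> Mt \<Longrightarrow> matched Mt u \<and> v = partner Mt u"
    using partner_of_fst partner_of_snd unfolding matched_def by blast
  show "matched Mt u \<and> v = partner Mt u \<Longrightarrow> (u,v) \<in> Mt \<or> (v,u) \<in> Mt"
    using matched_iff_fst_or_snd fst_matched_partner snd_matched_partner by blast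
qed

lemma sum_reindex_partner: "(\<Sum>w\<in>UNIV. f (partner Mt w)) = (\<Sum>w\<in>UNIV. f w :: real)"
proof -
  have "bij (partner Mt)" by (metis bijI injI partner_partner surjI)
  then show ?thesis by (rule sum.reindex_bij_betw)
qed

lemma sum_snd_matched_eq_sum_fst_matched:
  "(\<Sum>w\<in>UNIV. if snd_matched Mt w then f (partner Mt w) w else 0)
     = (\<Sum>w\<in>UNIV. if fst_matched Mt w then f w (partner Mt w) else (0::real))"
  using sum_reindex_partner[of "\<lambda>w. if snd_matched Mt w then f (partner Mt w) w else 0"]
  by (simp only: snd_matched_partner_iff partner_partner)

lemma sum_matched_split:
  "(\<Sum>w\<in>UNIV. if matched Mt w then f w else 0)
     = (\<Sum>w\<in>UNIV. if fst_matched Mt w then f w else 0) + (\<Sum>w\<in>UNIV. if snd_matched Mt w then f w else (0::real))"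
  unfolding sum.distrib[symmetric]
  using matched_iff_fst_or_snd fst_matched_not_snd_matched by (intro sum.cong) auto

lemma sum_mult_match_avg:
  "(\<Sum>w\<in>UNIV. L w * match_avg Mt Y w) = (\<Sum>w\<in>UNIV. match_avg Mt L w * Y w)"
proof -
  let ?m = "matched Mt" and ?p = "partner Mt"
  have cross: "(\<Sum>w\<in>UNIV. if ?m w then L w * Y (?p w) / 2 else 0)
      = (\<Sum>w\<in>UNIV. if ?m w then L (?p w) * Y w / 2 else 0)"
    using sum_reindex_partner[of "\<lambda>w. if ?m w then L w * Y (?p w) / 2 else 0"]
    by (simp only: partner_partner matched_partner_iff)
  have "(\<Sum>w\<in>UNIV. L w * match_avg Mt Y w) =
      (\<Sum>w\<in>UNIV. if ?m w then L w * Y w / 2 else L w * Y w)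
      + (\<Sum>w\<in>UNIV. if ?m w then L w * Y (?p w) / 2 else 0)"
    unfolding match_avg_def by (subst sum.distrib[symmetric], rule sum.cong) (auto simp: field_simps)
  also have "\<dots> = (\<Sum>w\<in>UNIV. match_avg Mt L w * Y w)"
    unfolding cross match_avg_def
    by (subst sum.distrib[symmetric], rule sum.cong) (auto simp: field_simps)
  finally show ?thesis .
qed

end

section \<open>The matrices of the continuous process\<close>

lemma Mmat_eq_partner:
  assumes "is_matching E (M t)"
  shows "Mmat M t u v = (if matched (M t) u then (if v = u \<or> v = partner (M t) u then 1/2 else 0)
                       else (if u = v then 1 else 0))"
  using matching_edge_iff_partner[OF assms, of u v] partner_neq[OF assms, of u]
  unfolding Mmat_def by (auto simp: partner_unmatched[OF assms])

lemma Mmat_sym: "Mmat M t u v = Mmat M t v u"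
  unfolding Mmat_def by auto

lemma sum_Mmat_mult:
  fixes M :: "nat \<Rightarrow> ('v::finite \<times> 'v) set"
  assumes "is_matching E (M t)"
  shows "(\<Sum>v\<in>UNIV. Mmat M t u v * f v) = match_avg (M t) f u"
proof (cases "matched (M t) u")
  case True
  then have "partner (M t) u \<noteq> u" using partner_neq[OF assms] by blast
  then have "(\<Sum>v\<in>UNIV. Mmat M t u v * f v) =
      (\<Sum>v\<in>UNIV. (if v = u then f u / 2 else 0) + (if v = partner (M t) u then f (partner (M t) u) / 2 else 0))"
    using True by (intro sum.cong) (auto simp: Mmat_eq_partner[of E M t, OF assms])
  also have "\<dots> = (f u + f (partner (M t) u)) / 2"
    by (simp only: sum.distrib sum.delta finite UNIV_I if_True) simp
  finally show ?thesis using True unfolding match_avg_def by simp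
next
  case False
  then have "(\<Sum>v\<in>UNIV. Mmat M t u v * f v) = (\<Sum>v\<in>UNIV. if v = u then f u else 0)"
    by (intro sum.cong) (auto simp: Mmat_eq_partner[of E M t, OF assms])
  then show ?thesis using False unfolding match_avg_def by simp
qed

lemma matmul_assoc: "matmul (matmul A B) C = matmul A (matmul B C)"
  unfolding matmul_def
  by (auto simp: fun_eq_iff sum_distrib_left sum_distrib_right mult.assoc intro: sum.swap[THEN trans])

lemma matmul_idm_left [simp]: "matmul idm A = A"
proof -
  have "(\<Sum>k\<in>UNIV. idm i k * A k j) = (\<Sum>k\<in>UNIV. if k = i then A k j else 0)" for i j
    by (intro sum.cong) (auto simp: idm_def)
  then show ?thesis unfolding matmul_def by (simp add: fun_eq_iff)
qed

lemma matmul_idm_right [simp]: "matmul A idm = A"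
proof -
  have "(\<Sum>k\<in>UNIV. A i k * idm k j) = (\<Sum>k\<in>UNIV. if k = j then A i k else 0)" for i j
    by (intro sum.cong) (auto simp: idm_def)
  then show ?thesis unfolding matmul_def by (simp add: fun_eq_iff)
qed

lemma foldl_matmul_Mmat:
  "foldl (\<lambda>A s. matmul A (Mmat M s)) A xs = matmul A (foldl (\<lambda>A s. matmul A (Mmat M s)) idm xs)"
proof (induction xs arbitrary: A)
  case Nil
  show ?case by simp
next
  case (Cons x xs)
  show ?case by (simp add: Cons.IH[of "matmul A (Mmat M x)"] Cons.IH[of "Mmat M x"] matmul_assoc)
qed

lemma Mprod_split:
  assumes "a \<le> Suc b" "b \<le> c"
  shows "Mprod M a c = matmul (Mprod M a b) (Mprod M (Suc b) c)"
proof -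
  have "[a..<Suc c] = [a..<Suc b] @ [Suc b..<Suc c]"
    using assms by (metis Suc_le_mono le_Suc_eq upt_add_eq_append le_add_diff_inverse)
  then show ?thesis unfolding Mprod_def by (simp add: foldl_matmul_Mmat[symmetric])
qed

lemma Mprod_Cons:
  assumes "s \<le> t"
  shows "Mprod M s t = matmul (Mmat M s) (Mprod M (Suc s) t)"
proof -
  have "[s..<Suc t] = s # [Suc s..<Suc t]" using assms by (simp add: upt_conv_Cons)
  then show ?thesis unfolding Mprod_def by (simp add: foldl_matmul_Mmat[symmetric])
qed

lemma Mprod_empty: "Mprod M (Suc t) t = idm"
  unfolding Mprod_def by simp

lemma sum_vecmat_matmul:
  "(\<Sum>w\<in>UNIV. x w * matmul A B w k) = (\<Sum>j\<in>UNIV. vecmat x A j * B j k)"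
  unfolding matmul_def vecmat_def
  by (simp add: sum_distrib_left sum_distrib_right mult_ac) (rule sum.swap)

definition doubly_stochastic :: "('v::finite \<Rightarrow> 'v \<Rightarrow> real) \<Rightarrow> bool" where
  "doubly_stochastic A \<longleftrightarrow>
     (\<forall>i j. 0 \<le> A i j) \<and> (\<forall>i. (\<Sum>j\<in>UNIV. A i j) = 1) \<and> (\<forall>j. (\<Sum>i\<in>UNIV. A i j) = 1)"

lemma doubly_stochastic_idm: "doubly_stochastic idm"
  unfolding doubly_stochastic_def idm_def by auto

lemma doubly_stochastic_matmul:
  assumes A: "doubly_stochastic A" and B: "doubly_stochastic B"
  shows "doubly_stochastic (matmul A B)"
proof -
  have rows: "(\<Sum>j\<in>UNIV. matmul A B i j) = 1" for i
  proof -
    have "(\<Sum>j\<in>UNIV. matmul A B i j) = (\<Sum>k\<in>UNIV. A i k * (\<Sum>j\<in>UNIV. B k j))"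
      unfolding matmul_def by (simp add: sum_distrib_left) (rule sum.swap)
    then show ?thesis using A B unfolding doubly_stochastic_def by simp
  qed
  have cols: "(\<Sum>i\<in>UNIV. matmul A B i j) = 1" for j
  proof -
    have "(\<Sum>i\<in>UNIV. matmul A B i j) = (\<Sum>k\<in>UNIV. (\<Sum>i\<in>UNIV. A i k) * B k j)"
      unfolding matmul_def by (simp add: sum_distrib_right) (rule sum.swap)
    then show ?thesis using A B unfolding doubly_stochastic_def by simp
  qed
  have "0 \<le> matmul A B i j" for i j
    using A B unfolding matmul_def doubly_stochastic_def by (intro sum_nonneg mult_nonneg_nonneg) auto
  then show ?thesis using rows cols unfolding doubly_stochastic_def by blast
qed

lemma doubly_stochastic_Mmat:
  fixes M :: "nat \<Rightarrow> ('v::finite \<times> 'v) set"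
  assumes "is_matching E (M t)"
  shows "doubly_stochastic (Mmat M t)"
proof -
  have rows: "(\<Sum>v\<in>UNIV. Mmat M t u v) = 1" for u
    using sum_Mmat_mult[of E M t u "\<lambda>_. 1", OF assms] by (simp add: match_avg_def)
  then have "(\<Sum>u\<in>UNIV. Mmat M t u v) = 1" for v
    by (simp add: Mmat_sym[of M t _ v])
  moreover have "0 \<le> Mmat M t u v" for u v
    unfolding Mmat_def by auto
  ultimately show ?thesis using rows unfolding doubly_stochastic_def by blast
qed

lemma doubly_stochastic_Mprod:
  fixes M :: "nat \<Rightarrow> ('v::finite \<times> 'v) set"
  assumes "\<And>t. is_matching E (M t)"
  shows "doubly_stochastic (Mprod M a b)"
proof -
  have "doubly_stochastic (foldl (\<lambda>A s. matmul A (Mmat M s)) idm xs)" for xs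
    by (induction xs rule: rev_induct)
      (auto intro: doubly_stochastic_idm doubly_stochastic_matmul doubly_stochastic_Mmat[OF assms])
  then show ?thesis unfolding Mprod_def .
qed

lemma sum_vecmat_doubly_stochastic:
  "doubly_stochastic A \<Longrightarrow> (\<Sum>v\<in>UNIV. vecmat x A v) = (\<Sum>u\<in>UNIV. x u)"
  unfolding vecmat_def doubly_stochastic_def
  by (simp add: sum.swap[of _ UNIV UNIV] sum_distrib_left[symmetric])

lemma abs_sub_mean_le_discrepancy:
  fixes xi :: "'v::finite \<Rightarrow> real"
  shows "\<bar>xi j - (\<Sum>v\<in>UNIV. xi v) / real CARD('v)\<bar> \<le> discrepancy xi"
proof -
  define n where "n = real CARD('v)"
  have n: "n > 0" unfolding n_def by simp
  have "{\<bar>xi u - xi v\<bar> | u v. True} = (\<lambda>(u,v). \<bar>xi u - xi v\<bar>) ` UNIV" by auto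
  then have "finite {\<bar>xi u - xi v\<bar> | u v. True}" by simp
  then have le: "\<bar>xi j - xi v\<bar> \<le> discrepancy xi" for v
    unfolding discrepancy_def by (intro Max_ge) auto
  have "\<bar>xi j - (\<Sum>v\<in>UNIV. xi v) / n\<bar> = \<bar>\<Sum>v\<in>UNIV. xi j - xi v\<bar> / n"
    using n by (simp add: sum_subtractf n_def field_simps)
  also have "\<dots> \<le> (\<Sum>v\<in>UNIV. \<bar>xi j - xi v\<bar>) / n"
    using n by (intro divide_right_mono sum_abs) auto
  also have "\<dots> \<le> (\<Sum>v\<in>(UNIV::'v set). discrepancy xi) / n"
    using n by (intro divide_right_mono sum_mono le) auto
  also have "\<dots> = discrepancy xi" using n by (simp add: n_def)
  finally show ?thesis unfolding n_def .
qed

lemma abs_weighted_sum_sub_mean_le_discrepancy: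
  fixes xi Y :: "'v::finite \<Rightarrow> real"
  assumes "\<And>j. Y j \<ge> 0" "(\<Sum>j\<in>UNIV. Y j) = 1"
  shows "\<bar>(\<Sum>j\<in>UNIV. xi j * Y j) - (\<Sum>v\<in>UNIV. xi v) / real CARD('v)\<bar> \<le> discrepancy xi"
proof -
  let ?m = "(\<Sum>v\<in>UNIV. xi v) / real CARD('v)"
  have "(\<Sum>j\<in>UNIV. (xi j - ?m) * Y j) = (\<Sum>j\<in>UNIV. xi j * Y j) - ?m * (\<Sum>j\<in>UNIV. Y j)"
    by (simp add: left_diff_distrib sum_subtractf sum_distrib_left)
  then have "(\<Sum>j\<in>UNIV. xi j * Y j) - ?m = (\<Sum>j\<in>UNIV. (xi j - ?m) * Y j)"
    using assms(2) by simp
  then have "\<bar>(\<Sum>j\<in>UNIV. xi j * Y j) - ?m\<bar> \<le> (\<Sum>j\<in>UNIV. \<bar>xi j - ?m\<bar> * Y j)"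
    using assms(1) by (simp add: sum_abs[THEN order_trans] abs_mult)
  also have "\<dots> \<le> (\<Sum>j\<in>UNIV. discrepancy xi * Y j)"
    using assms(1) abs_sub_mean_le_discrepancy by (intro sum_mono mult_right_mono) auto
  also have "\<dots> = discrepancy xi" using assms(2) by (simp add: sum_distrib_left[symmetric])
  finally show ?thesis .
qed

lemma sum_idm_minus_mean_sq:
  fixes w :: "'v::finite"
  shows "(\<Sum>j\<in>UNIV. (idm j w - 1 / real CARD('v))^2) = 1 - 1 / real CARD('v)"
proof -
  define n where "n = real CARD('v)"
  have n: "n > 0" unfolding n_def by simp
  have "(idm j w - 1 / n)^2 = idm j w * (1 - 2 / n) + 1 / n^2" for j
    using n by (simp add: idm_def power2_eq_square field_simps)
  then have "(\<Sum>j\<in>UNIV. (idm j w - 1 / n)^2) = (1 - 2 / n) + n * (1 / n^2)"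
    by (simp add: sum.distrib sum_distrib_right[symmetric] idm_def n_def)
  also have "\<dots> = 1 - 1 / n" using n by (simp add: field_simps power2_eq_square)
  finally show ?thesis unfolding n_def .
qed

section \<open>Rounding errors of the discrete process\<close>

text \<open>The error made at the first node u of a matched edge when the excess token is sent
  according to the bit \<beta>; the second node makes the opposite error.\<close>

definition rounding_error :: "('v \<times> 'v) set \<Rightarrow> ('v \<Rightarrow> int) \<Rightarrow> bool \<Rightarrow> 'v \<Rightarrow> real" where
  "rounding_error Mt L \<beta> u = (if odd (L u + L (partner Mt u)) then (if \<beta> then 1/2 else - 1/2) else 0)"

lemma of_int_half_rounded:
  "real_of_int (s div 2 + (if odd s \<and> \<beta> then 1 else 0)) - real_of_int s / 2 =
     (if odd s then (if \<beta> then 1/2 else - 1/2) else 0)"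
proof (cases "odd s")
  case True
  then obtain q where q: "s = 2 * q + 1" by (metis oddE)
  have "(2 * q + 1) div 2 = q" by presburger
  then show ?thesis using True q by (cases \<beta>) (simp_all add: field_simps)
next
  case False
  then obtain q where "s = 2 * q" by (metis evenE)
  then show ?thesis using False by simp
qed

lemma disc_step_eq_partner:
  "disc_step M t b x w =
     (if fst_matched (M t) w then
        (let s = x w + x (partner (M t) w) in s div 2 + (if odd s \<and> b (t,w) then 1 else 0))
      else if snd_matched (M t) w then
        (let s = x (partner (M t) w) + x w in s div 2 + (if odd s \<and> \<not> b (t, partner (M t) w) then 1 else 0))
      else x w)"
proof (cases "fst_matched (M t) w")
  case True
  then have "partner (M t) w = (THE v. (w,v) \<in> M t)" unfolding partner_def fst_matched_def by simp
  then show ?thesis using True unfolding disc_step_def fst_matched_def by (simp only: if_True Let_def)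
next
  case not_fst: False
  show ?thesis
  proof (cases "snd_matched (M t) w")
    case True
    then have "partner (M t) w = (THE v. (v,w) \<in> M t)"
      using not_fst unfolding partner_def fst_matched_def snd_matched_def by simp
    then show ?thesis using True not_fst unfolding disc_step_def fst_matched_def snd_matched_def
      by (simp only: if_True if_False Let_def)
  next
    case False
    then show ?thesis using not_fst unfolding disc_step_def fst_matched_def snd_matched_def
      by (simp only: if_False)
  qed
qed

lemma load_Suc_minus_match_avg:
  fixes b :: "nat \<times> 'v \<Rightarrow> bool" and x0 :: "'v \<Rightarrow> int"
  assumes matching: "is_matching E (M (Suc T))"
  defines "t \<equiv> Suc T" and "L \<equiv> load M b x0 T"
  shows "real_of_int (load M b x0 (Suc T) w) - match_avg (M t) (\<lambda>v. real_of_int (L v)) w =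
    (if fst_matched (M t) w then rounding_error (M t) L (b (t,w)) w
     else if snd_matched (M t) w then - rounding_error (M t) L (b (t, partner (M t) w)) (partner (M t) w)
     else 0)"
proof -
  have matching_t: "is_matching E (M t)" unfolding t_def by (rule matching)
  have step: "load M b x0 (Suc T) w = disc_step M t b L w" unfolding t_def L_def by simp
  let ?p = "partner (M t) w"
  consider "fst_matched (M t) w" | "snd_matched (M t) w" | "\<not> matched (M t) w"
    using matched_iff_fst_or_snd[OF matching_t] by blast
  then show ?thesis
  proof cases
    case 1
    then show ?thesis
      using matched_iff_fst_or_snd[OF matching_t, of w] of_int_half_rounded[of "L w + L ?p"]
      unfolding step disc_step_eq_partner match_avg_def rounding_error_def
      by (simp add: add_divide_distrib Let_def)
  next
    case 2
    then have "\<not> fst_matched (M t) w" "matched (M t) w"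
      using fst_matched_not_snd_matched[OF matching_t] matched_iff_fst_or_snd[OF matching_t] by blast+
    moreover have "partner (M t) ?p = w" by (rule partner_partner[OF matching_t])
    ultimately show ?thesis
      using 2 of_int_half_rounded[of "L ?p + L w" "b (t, ?p)"] of_int_half_rounded[of "L ?p + L w" "\<not> b (t, ?p)"]
      unfolding step disc_step_eq_partner match_avg_def rounding_error_def
      by (auto simp add: add_divide_distrib Let_def add.commute)
  next
    case 3
    then show ?thesis
      using matched_iff_fst_or_snd[OF matching_t, of w]
      unfolding step disc_step_eq_partner match_avg_def by simp
  qed
qed

section \<open>Tail bounds from moment generating functions\<close>

lemma cosh_le_exp_half_square:
  fixes x :: real
  shows "(exp x + exp (- x)) / 2 \<le> exp (x^2 / 2)"
proof -
  have nonneg: "(exp x + exp (- x)) / 2 \<le> exp (x^2 / 2)" if "x \<ge> 0" for x :: real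
  proof -
    have "- (2*x) * (1/2) + ln (1 + (1/2) * (exp (2*x) - 1)) \<le> (2*x)^2 / 8"
      using Hoeffdings_lemma_aux[of "2*x" "1/2"] that by simp
    then have "ln (1 + (1/2) * (exp (2*x) - 1)) \<le> x + x^2/2"
      by (simp add: power2_eq_square)
    moreover have "1 + (1/2) * (exp (2*x) - 1) > 0"
      using exp_gt_zero[of "2*x"] by (simp add: field_simps add_pos_pos)
    ultimately have "1 + (1/2) * (exp (2*x) - 1) \<le> exp (x + x^2/2)"
      by (metis exp_le_cancel_iff exp_ln)
    moreover have "exp (x + x^2/2) = exp x * exp (x^2/2)" by (rule exp_add)
    ultimately have "(1 + exp (2*x)) / 2 \<le> exp x * exp (x^2/2)" by (simp add: field_simps)
    moreover have "(1 + exp (2*x)) / 2 = exp x * ((exp x + exp (- x)) / 2)"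
      by (simp add: field_simps exp_add[symmetric] exp_minus)
    ultimately show ?thesis by (simp add: mult_le_cancel_left_pos)
  qed
  show ?thesis
    using nonneg[of x] nonneg[of "- x"] by (cases "x \<ge> 0") (simp_all add: add.commute)
qed

lemma expectation_pair_pmf:
  fixes f :: "'a \<times> 'b \<Rightarrow> real"
  assumes "finite (set_pmf p)" "finite (set_pmf q)"
  shows "measure_pmf.expectation (pair_pmf p q) f =
         measure_pmf.expectation p (\<lambda>a. measure_pmf.expectation q (\<lambda>b. f (a,b)))"
proof -
  have "measure_pmf.expectation (pair_pmf p q) f = (\<Sum>x\<in>set_pmf p \<times> set_pmf q. f x * pmf (pair_pmf p q) x)"
    using assms by (intro integral_measure_pmf_real) auto
  also have "\<dots> = (\<Sum>a\<in>set_pmf p. \<Sum>b\<in>set_pmf q. f (a,b) * (pmf p a * pmf q b))"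
    unfolding sum.cartesian_product by (intro sum.cong refl) (auto simp: pmf_pair)
  also have "\<dots> = (\<Sum>a\<in>set_pmf p. (\<Sum>b\<in>set_pmf q. f (a,b) * pmf q b) * pmf p a)"
    by (simp add: sum_distrib_left sum_distrib_right mult_ac)
  also have "\<dots> = (\<Sum>a\<in>set_pmf p. measure_pmf.expectation q (\<lambda>b. f (a,b)) * pmf p a)"
    using assms by (intro sum.cong refl arg_cong2[where f="(*)"]) (simp add: integral_measure_pmf_real[symmetric])
  also have "\<dots> = measure_pmf.expectation p (\<lambda>a. measure_pmf.expectation q (\<lambda>b. f (a,b)))"
    using assms by (intro integral_measure_pmf_real[symmetric]) auto
  finally show ?thesis .
qed

lemma prob_ge_le_exp_moment:
  fixes W :: "'a \<Rightarrow> real"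
  assumes "finite (set_pmf p)" "l > 0"
  shows "measure_pmf.prob p {x. W x \<ge> a} \<le> measure_pmf.expectation p (\<lambda>x. exp (l * W x)) / exp (l * a)"
proof -
  have "measure_pmf.prob p {x\<in>space (measure_pmf p). exp (l * W x) \<ge> exp (l * a)}
      \<le> measure_pmf.expectation p (\<lambda>x. exp (l * W x)) / exp (l * a)"
    using assms by (intro integral_Markov_inequality_measure[where A = UNIV])
      (auto intro: integrable_measure_pmf_finite)
  moreover have "{x\<in>space (measure_pmf p). exp (l * W x) \<ge> exp (l * a)} = {x. W x \<ge> a}"
    using assms by auto
  ultimately show ?thesis by simp
qed

text \<open>If C = 0 every exponential moment is at most 1, so the optimal Chernoff exponent is
  unbounded and the probability vanishes.\<close>

lemma prob_ge_le_subgaussian: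
  fixes W :: "'a \<Rightarrow> real"
  assumes fin: "finite (set_pmf p)"
    and mgf: "\<And>l. measure_pmf.expectation p (\<lambda>x. exp (l * W x)) \<le> exp (l^2 * C)"
    and "C \<ge> 0" "a > 0"
  shows "measure_pmf.prob p {x. W x \<ge> a} \<le> (if C = 0 then 0 else exp (- (a^2 / (4 * C))))"
proof -
  have chernoff: "measure_pmf.prob p {x. W x \<ge> a} \<le> exp (l^2 * C - l * a)" if "l > 0" for l
  proof -
    have "measure_pmf.prob p {x. W x \<ge> a} \<le> measure_pmf.expectation p (\<lambda>x. exp (l * W x)) / exp (l * a)"
      by (rule prob_ge_le_exp_moment[OF fin that])
    also have "\<dots> \<le> exp (l^2 * C) / exp (l * a)" by (intro divide_right_mono mgf) auto
    finally show ?thesis by (simp add: exp_diff)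
  qed
  show ?thesis
  proof (cases "C = 0")
    case False
    then have "C > 0" using \<open>C \<ge> 0\<close> by simp
    then have "(a / (2*C))^2 * C - (a / (2*C)) * a = - (a^2 / (4 * C))"
      by (simp add: field_simps power2_eq_square)
    then show ?thesis using chernoff[of "a / (2*C)"] \<open>C > 0\<close> \<open>a > 0\<close> by simp
  next
    case True
    define q where "q = measure_pmf.prob p {x. W x \<ge> a}"
    have "q \<le> 0"
    proof (rule ccontr)
      assume "\<not> q \<le> 0"
      then have "q > 0" by simp
      moreover have "q \<le> 1" unfolding q_def by simp
      ultimately have "ln q \<le> 0" by simp
      define l where "l = (1 - ln q) / a"
      have "l > 0" unfolding l_def using \<open>a > 0\<close> \<open>ln q \<le> 0\<close> by simp
      then have "q \<le> exp (l^2 * C - l * a)" unfolding q_def by (rule chernoff)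
      also have "\<dots> = q / exp 1"
        using True \<open>a > 0\<close> \<open>q > 0\<close> unfolding l_def by (simp add: exp_diff)
      also have "\<dots> < q" using \<open>q > 0\<close> by (simp add: divide_less_eq)
      finally show False by simp
    qed
    then show ?thesis using True unfolding q_def by simp
  qed
qed

lemma prob_abs_ge_le_subgaussian:
  fixes W :: "'a \<Rightarrow> real"
  assumes fin: "finite (set_pmf p)"
    and mgf: "\<And>l. measure_pmf.expectation p (\<lambda>x. exp (l * W x)) \<le> exp (l^2 * C)"
    and C: "C \<ge> 0" and a: "a > 0"
  shows "measure_pmf.prob p {x. \<bar>W x\<bar> \<ge> a} \<le> (if C = 0 then 0 else 2 * exp (- (a^2 / (4 * C))))"
proof -
  have mgf_neg: "measure_pmf.expectation p (\<lambda>x. exp (l * (- W x))) \<le> exp (l^2 * C)" for l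
    using mgf[of "- l"] by simp
  have "measure_pmf.prob p {x. \<bar>W x\<bar> \<ge> a} \<le> measure_pmf.prob p ({x. W x \<ge> a} \<union> {x. - W x \<ge> a})"
    by (intro measure_pmf.finite_measure_mono) auto
  also have "\<dots> \<le> measure_pmf.prob p {x. W x \<ge> a} + measure_pmf.prob p {x. - W x \<ge> a}"
    by (rule measure_Un_le) auto
  also have "\<dots> \<le> (if C = 0 then 0 else exp (- (a^2 / (4 * C)))) + (if C = 0 then 0 else exp (- (a^2 / (4 * C))))"
    by (intro add_mono prob_ge_le_subgaussian[OF fin mgf C a] prob_ge_le_subgaussian[OF fin mgf_neg C a])
  finally show ?thesis by (simp split: if_splits)
qed

section \<open>The random orientations\<close>

lemma finite_set_Pi_pmf_bernoulli:
  "finite A \<Longrightarrow> finite (set_pmf (Pi_pmf A False (\<lambda>_. bernoulli_pmf (1/2))))"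
  by (simp add: set_Pi_pmf finite_PiE_dflt)

lemma finite_set_orient_pmf: "finite (set_pmf (orient_pmf T :: (nat \<times> 'v::finite \<Rightarrow> bool) pmf))"
  unfolding orient_pmf_def by (rule finite_set_Pi_pmf_bernoulli) simp

lemma orient_pmf_Suc:
  "(orient_pmf (Suc T) :: (nat \<times> 'v::finite \<Rightarrow> bool) pmf) =
     map_pmf (\<lambda>(f,g) x. if x \<in> {1..T} \<times> UNIV then f x else g x)
       (pair_pmf (orient_pmf T) (Pi_pmf ({Suc T} \<times> UNIV) False (\<lambda>_. bernoulli_pmf (1/2))))"
proof -
  have "{1..Suc T} \<times> (UNIV :: 'v set) = ({1..T} \<times> UNIV) \<union> ({Suc T} \<times> UNIV)" by auto
  then show ?thesis unfolding orient_pmf_def by (simp only:) (rule Pi_pmf_union, auto)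
qed

lemma load_cong:
  assumes "\<And>t w. 1 \<le> t \<Longrightarrow> t \<le> T \<Longrightarrow> b (t,w) = b' (t,w)"
  shows "load M b x0 T = load M b' x0 T"
  using assms
proof (induction T)
  case (Suc T)
  then have "disc_step M (Suc T) b x = disc_step M (Suc T) b' x" for x
    unfolding disc_step_def by (simp add: fun_eq_iff)
  then show ?case using Suc by simp
qed simp

section \<open>The martingale\<close>

locale load_martingale =
  fixes E :: "('v::finite \<times> 'v) set" and M :: "nat \<Rightarrow> ('v \<times> 'v) set"
    and t2 :: nat and k :: 'v and x0 :: "'v \<Rightarrow> int"
  assumes matching: "\<And>t. is_matching E (M t)"
begin

definition coeff :: "nat \<Rightarrow> 'v \<Rightarrow> real" where
  "coeff s w = Mprod M (Suc s) t2 w k"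

definition mart :: "nat \<Rightarrow> (nat \<times> 'v \<Rightarrow> bool) \<Rightarrow> real" where
  "mart T b = (\<Sum>w\<in>UNIV. real_of_int (load M b x0 T w) * coeff T w)"

definition coeff_gap :: "nat \<Rightarrow> 'v \<Rightarrow> real" where
  "coeff_gap s u = coeff s u - coeff s (partner (M s) u)"

definition gap_sq :: "nat \<Rightarrow> real" where
  "gap_sq s = (\<Sum>u\<in>UNIV. if fst_matched (M s) u then (coeff_gap s u)^2 else 0)"

definition coeff_dev :: "nat \<Rightarrow> real \<Rightarrow> real" where
  "coeff_dev s c = (\<Sum>w\<in>UNIV. (coeff s w - c)^2)"

definition mart_incr :: "nat \<Rightarrow> ('v \<Rightarrow> int) \<Rightarrow> (nat \<times> 'v \<Rightarrow> bool) \<Rightarrow> real" where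
  "mart_incr t L g =
     (\<Sum>u\<in>UNIV. if fst_matched (M t) u then rounding_error (M t) L (g (t,u)) u * coeff_gap t u else 0)"

lemma coeff_dev_nonneg: "coeff_dev s c \<ge> 0"
  unfolding coeff_dev_def by (intro sum_nonneg) auto

lemma coeff_step: "Suc s \<le> t2 \<Longrightarrow> coeff s w = match_avg (M (Suc s)) (coeff (Suc s)) w"
  unfolding coeff_def using Mprod_Cons[of "Suc s" t2 M]
  by (simp add: matmul_def sum_Mmat_mult[OF matching])

lemma mart_increment:
  assumes "Suc T \<le> t2"
  shows "mart (Suc T) b - mart T b = mart_incr (Suc T) (load M b x0 T) b"
proof -
  define t where "t = Suc T"
  define L where "L = load M b x0 T"
  define e where "e u = rounding_error (M t) L (b (t,u)) u" for u
  let ?Y = "coeff t" and ?p = "partner (M t)"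
  have matching_t: "is_matching E (M t)" by (rule matching)
  have "mart T b = (\<Sum>w\<in>UNIV. match_avg (M t) (\<lambda>v. real_of_int (L v)) w * ?Y w)"
    unfolding mart_def L_def t_def coeff_step[OF assms] by (rule sum_mult_match_avg[OF matching])
  then have "mart t b - mart T b =
      (\<Sum>w\<in>UNIV. (real_of_int (load M b x0 t w) - match_avg (M t) (\<lambda>v. real_of_int (L v)) w) * ?Y w)"
    by (simp add: mart_def sum_subtractf[symmetric] left_diff_distrib)
  also have "\<dots> = (\<Sum>w\<in>UNIV. (if fst_matched (M t) w then e w * ?Y w else 0)
      - (if snd_matched (M t) w then e (?p w) * ?Y w else 0))"
    using load_Suc_minus_match_avg[where E=E and M=M and T=T, OF matching] fst_matched_not_snd_matched[OF matching_t]
    unfolding e_def L_def t_def by (intro sum.cong) auto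
  also have "\<dots> = (\<Sum>w\<in>UNIV. if fst_matched (M t) w then e w * ?Y w else 0)
      - (\<Sum>w\<in>UNIV. if fst_matched (M t) w then e w * ?Y (?p w) else 0)"
    unfolding sum_subtractf
    using sum_snd_matched_eq_sum_fst_matched[OF matching_t, of "\<lambda>u w. e u * ?Y w"] by simp
  also have "\<dots> = mart_incr t L b"
    unfolding mart_incr_def sum_subtractf[symmetric] coeff_gap_def e_def
    by (rule sum.cong) (auto simp: right_diff_distrib)
  finally show ?thesis unfolding t_def L_def .
qed

lemma coeff_dev_step:
  assumes "Suc s \<le> t2"
  shows "coeff_dev (Suc s) c - coeff_dev s c = gap_sq (Suc s) / 2"
proof -
  define t where "t = Suc s"
  let ?Y = "coeff t" and ?p = "partner (M t)" and ?m = "matched (M t)"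
  have matching_t: "is_matching E (M t)" by (rule matching)
  define G where "G w = (?Y w - c)^2 - (match_avg (M t) ?Y w - c)^2" for w
  have "coeff_dev t c - coeff_dev s c = (\<Sum>w\<in>UNIV. G w)"
    unfolding coeff_dev_def G_def sum_subtractf[symmetric] coeff_step[OF assms] t_def ..
  moreover have "(\<Sum>w\<in>UNIV. G (?p w)) = (\<Sum>w\<in>UNIV. G w)"
    by (rule sum_reindex_partner[OF matching_t])
  ultimately have "2 * (coeff_dev t c - coeff_dev s c) = (\<Sum>w\<in>UNIV. G w) + (\<Sum>w\<in>UNIV. G (?p w))"
    by simp
  also have "\<dots> = (\<Sum>w\<in>UNIV. if ?m w then (?Y w - ?Y (?p w))^2 / 2 else 0)"
    unfolding sum.distrib[symmetric] using matching_t
    by (intro sum.cong refl) (auto simp: G_def match_avg_def partner_partner[OF matching_t] matched_partner_iff[OF matching_t] power2_eq_square field_simps)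
  also have "\<dots> = (\<Sum>w\<in>UNIV. if fst_matched (M t) w then (?Y w - ?Y (?p w))^2 / 2 else 0)
      + (\<Sum>w\<in>UNIV. if snd_matched (M t) w then (?Y (?p w) - ?Y w)^2 / 2 else 0)"
    unfolding sum_matched_split[OF matching_t] by (simp add: power2_commute cong: if_cong)
  also have "\<dots> = gap_sq t"
    unfolding sum_snd_matched_eq_sum_fst_matched[OF matching_t, of "\<lambda>u w. (?Y u - ?Y w)^2 / 2"]
      gap_sq_def coeff_gap_def
    by (simp add: sum.distrib[symmetric] if_distrib cong: if_cong)
  finally show ?thesis unfolding t_def by simp
qed

lemma sum_gap_sq_eq:
  "T \<le> t2 \<Longrightarrow> (\<Sum>s\<in>{1..T}. gap_sq s) = 2 * (coeff_dev T c - coeff_dev 0 c)"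
proof (induction T)
  case (Suc T)
  then show ?case using coeff_dev_step[of T c] by simp
qed simp

lemma mgf_rounding_error_le:
  "exp (l * (if fst_matched (M t) u then rounding_error (M t) L True u * coeff_gap t u else 0)) * (1/2) +
   exp (l * (if fst_matched (M t) u then rounding_error (M t) L False u * coeff_gap t u else 0)) * (1 - 1/2)
   \<le> exp (l^2 / 8 * (if fst_matched (M t) u then (coeff_gap t u)^2 else 0))"
proof -
  have "(exp (l * coeff_gap t u / 2) + exp (- (l * coeff_gap t u / 2))) / 2
      \<le> exp ((l * coeff_gap t u / 2)^2 / 2)"
    by (rule cosh_le_exp_half_square)
  then show ?thesis
    unfolding rounding_error_def by (auto simp: power_mult_distrib field_simps)
qed

lemma mgf_mart_incr_le:
  "measure_pmf.expectation (Pi_pmf ({t} \<times> UNIV) False (\<lambda>_. bernoulli_pmf (1/2)))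
     (\<lambda>g. exp (l * mart_incr t L g)) \<le> exp (l^2 / 8 * gap_sq t)"
proof -
  define h where "h u \<beta> = (if fst_matched (M t) u then rounding_error (M t) L \<beta> u * coeff_gap t u else 0)"
    for u \<beta>
  define H where "H x \<beta> = exp (l * h (snd x) \<beta>)" for x :: "nat \<times> 'v" and \<beta>
  define q where "q u = l^2 / 8 * (if fst_matched (M t) u then (coeff_gap t u)^2 else 0)" for u
  define B where "B = {t} \<times> (UNIV :: 'v set)"
  have B: "B = Pair t ` UNIV" and inj: "inj (Pair t :: 'v \<Rightarrow> _)"
    unfolding B_def by (auto intro: injI)
  have "exp (l * mart_incr t L g) = (\<Prod>u\<in>UNIV. exp (l * h u (g (t,u))))" for g
    unfolding mart_incr_def h_def by (simp add: sum_distrib_left exp_sum)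
  also have "(\<Prod>u\<in>UNIV. exp (l * h u (g (t,u)))) = (\<Prod>x\<in>B. H x (g x))" for g
    unfolding B H_def using inj by (simp add: prod.reindex)
  finally have "exp (l * mart_incr t L g) = (\<Prod>x\<in>B. H x (g x))" for g .
  then have "measure_pmf.expectation (Pi_pmf B False (\<lambda>_. bernoulli_pmf (1/2))) (\<lambda>g. exp (l * mart_incr t L g))
      = measure_pmf.expectation (Pi_pmf B False (\<lambda>_. bernoulli_pmf (1/2))) (\<lambda>g. \<Prod>x\<in>B. H x (g x))"
    by simp
  also have "\<dots> = (\<Prod>x\<in>B. measure_pmf.expectation (bernoulli_pmf (1/2)) (H x))"
    unfolding B_def
    by (intro expectation_prod_Pi_pmf) (auto simp: H_def intro: integrable_measure_pmf_finite)
  also have "\<dots> = (\<Prod>x\<in>B. H x True * (1/2) + H x False * (1 - 1/2))"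
    by simp
  also have "\<dots> \<le> (\<Prod>x\<in>B. exp (q (snd x)))"
    unfolding H_def h_def q_def
    by (intro prod_mono conjI mgf_rounding_error_le) (simp add: add_nonneg_nonneg)
  also have "\<dots> = (\<Prod>u\<in>UNIV. exp (q u))"
    unfolding B using inj by (simp add: prod.reindex)
  also have "\<dots> = exp (l^2 / 8 * gap_sq t)"
    unfolding q_def gap_sq_def by (simp add: exp_sum sum_distrib_left if_distrib)
  finally show ?thesis unfolding B_def .
qed

lemma mart_merge_rounds:
  fixes f g :: "nat \<times> 'v \<Rightarrow> bool"
  assumes "Suc T \<le> t2"
  defines "b \<equiv> \<lambda>x. if x \<in> {1..T} \<times> UNIV then f x else g x"
  shows "mart (Suc T) b - mart 0 b = (mart T f - mart 0 f) + mart_incr (Suc T) (load M f x0 T) g"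
proof -
  have "load M b x0 T = load M f x0 T"
    by (rule load_cong) (auto simp: b_def)
  moreover have "mart_incr (Suc T) L b = mart_incr (Suc T) L g" for L
    by (simp add: mart_incr_def b_def cong: if_cong)
  ultimately show ?thesis
    using mart_increment[OF assms(1), of b] unfolding mart_def by (simp add: algebra_simps)
qed

text \<open>The bits of round T + 1 are independent of the loads after round T, so the moment
  generating function factorises into that of the first T rounds and that of one increment.\<close>

lemma mgf_mart_le:
  "T \<le> t2 \<Longrightarrow> measure_pmf.expectation (orient_pmf T) (\<lambda>b. exp (l * (mart T b - mart 0 b)))
     \<le> exp (l^2 / 8 * (\<Sum>s\<in>{1..T}. gap_sq s))"
proof (induction T)
  case 0
  then show ?case by simp
next
  case (Suc T)
  define t where "t = Suc T"
  define Q where "Q = (Pi_pmf ({t} \<times> UNIV) False (\<lambda>_. bernoulli_pmf (1/2)) :: (nat \<times> 'v \<Rightarrow> bool) pmf)"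
  define F where "F f = exp (l * (mart T f - mart 0 f))" for f
  define merge where "merge = (\<lambda>(f::nat \<times> 'v \<Rightarrow> bool, g::nat \<times> 'v \<Rightarrow> bool) x.
      if x \<in> {1..T} \<times> UNIV then f x else g x)"
  have finO: "finite (set_pmf (orient_pmf T :: (nat \<times> 'v \<Rightarrow> bool) pmf))"
    by (rule finite_set_orient_pmf)
  have finQ: "finite (set_pmf Q)" unfolding Q_def by (rule finite_set_Pi_pmf_bernoulli) simp
  have merged: "exp (l * (mart t (merge (f,g)) - mart 0 (merge (f,g))))
      = F f * exp (l * mart_incr t (load M f x0 T) g)" for f g
    unfolding merge_def case_prod_conv t_def F_def mart_merge_rounds[OF Suc.prems]
    by (simp add: distrib_left exp_add)
  have "measure_pmf.expectation (orient_pmf t) (\<lambda>b. exp (l * (mart t b - mart 0 b)))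
      = measure_pmf.expectation (pair_pmf (orient_pmf T) Q)
          (\<lambda>fg. exp (l * (mart t (merge fg) - mart 0 (merge fg))))"
    unfolding t_def orient_pmf_Suc Q_def merge_def by simp
  also have "\<dots> = measure_pmf.expectation (pair_pmf (orient_pmf T) Q)
      (\<lambda>fg. F (fst fg) * exp (l * mart_incr t (load M (fst fg) x0 T) (snd fg)))"
    using merged by (metis prod.collapse)
  also have "\<dots> = measure_pmf.expectation (orient_pmf T)
      (\<lambda>f. F f * measure_pmf.expectation Q (\<lambda>g. exp (l * mart_incr t (load M f x0 T) g)))"
    using expectation_pair_pmf[OF finO finQ] by simp
  also have "\<dots> \<le> measure_pmf.expectation (orient_pmf T) (\<lambda>f. F f * exp (l^2 / 8 * gap_sq t))"
  proof -
    have "measure_pmf.expectation Q (\<lambda>g. exp (l * mart_incr t (load M f x0 T) g))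
        \<le> exp (l^2 / 8 * gap_sq t)" for f
      unfolding Q_def by (rule mgf_mart_incr_le)
    then show ?thesis
      using finO by (intro integral_mono_AE)
        (auto simp: AE_measure_pmf_iff F_def intro: mult_left_mono integrable_measure_pmf_finite)
  qed
  also have "\<dots> = measure_pmf.expectation (orient_pmf T) F * exp (l^2 / 8 * gap_sq t)"
    by simp
  also have "\<dots> \<le> exp (l^2 / 8 * (\<Sum>s\<in>{1..T}. gap_sq s)) * exp (l^2 / 8 * gap_sq t)"
    using Suc unfolding F_def by (intro mult_right_mono) auto
  also have "\<dots> = exp (l^2 / 8 * (\<Sum>s\<in>{1..t}. gap_sq s))"
    unfolding t_def by (simp add: exp_add[symmetric] distrib_left)
  finally show ?case unfolding t_def .
qed

lemma mgf_mart_le_coeff_dev: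
  assumes "T \<le> t2"
  shows "measure_pmf.expectation (orient_pmf T) (\<lambda>b. exp (l * (mart T b - mart 0 b)))
     \<le> exp (l^2 * coeff_dev T c)"
proof -
  have "(\<Sum>s\<in>{1..T}. gap_sq s) \<le> 2 * coeff_dev T c"
    using sum_gap_sq_eq[OF assms, of c] coeff_dev_nonneg[of 0 c] by simp
  then have "l^2 / 8 * (\<Sum>s\<in>{1..T}. gap_sq s) \<le> l^2 / 8 * (2 * coeff_dev T c)"
    by (intro mult_left_mono) auto
  also have "\<dots> \<le> l^2 * coeff_dev T c"
    using mult_nonneg_nonneg[OF zero_le_power2[of l] coeff_dev_nonneg[of T c]] by simp
  finally show ?thesis using mgf_mart_le[OF assms, of l] by (meson exp_le_cancel_iff order_trans)
qed

text \<open>mart 0 is the continuous load after t1 rounds, averaged with the weights coeff t1.\<close>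

lemma mart_0_close_to_mean:
  fixes K :: real and t1 :: nat
  assumes smooth: "smoothing M K (1 / (2 * real CARD('v))) 0 t1"
    and disc: "discrepancy (\<lambda>w. real_of_int (x0 w)) \<le> K" and "t1 \<le> t2"
  shows "\<bar>mart 0 b - (\<Sum>w\<in>UNIV. real_of_int (x0 w)) / real CARD('v)\<bar> \<le> 1 / (2 * real CARD('v))"
proof -
  define xi where "xi = vecmat (\<lambda>w. real_of_int (x0 w)) (Mprod M (Suc 0) t1)"
  have "mart 0 b = (\<Sum>j\<in>UNIV. xi j * coeff t1 j)"
    unfolding mart_def coeff_def xi_def using Mprod_split[of "Suc 0" t1 t2 M] \<open>t1 \<le> t2\<close>
    by (simp add: sum_vecmat_matmul)
  moreover have "(\<Sum>v\<in>UNIV. xi v) = (\<Sum>w\<in>UNIV. real_of_int (x0 w))"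
    unfolding xi_def by (rule sum_vecmat_doubly_stochastic[OF doubly_stochastic_Mprod[OF matching]])
  moreover have "\<bar>(\<Sum>j\<in>UNIV. xi j * coeff t1 j) - (\<Sum>v\<in>UNIV. xi v) / real CARD('v)\<bar> \<le> discrepancy xi"
    using doubly_stochastic_Mprod[OF matching, where a="Suc t1" and b=t2]
    unfolding coeff_def doubly_stochastic_def
    by (intro abs_weighted_sum_sub_mean_le_discrepancy) auto
  moreover have "discrepancy xi \<le> 1 / (2 * real CARD('v))"
    using smooth disc unfolding smoothing_def xi_def by blast
  ultimately show ?thesis by simp
qed

lemma load_weighted_tail:
  fixes K :: real and t1 :: nat and \<delta> :: real
  assumes smooth: "smoothing M K (1 / (2 * real CARD('v))) 0 t1"
    and disc: "discrepancy (\<lambda>w. real_of_int (x0 w)) \<le> K" and "t1 \<le> t2"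
    and "\<delta> > 1 / real CARD('v)"
  defines "S \<equiv> \<Sum>w\<in>UNIV. (Mprod M (Suc t1) t2 w k - 1 / real CARD('v))^2"
  shows "measure_pmf.prob (orient_pmf t1)
     {b. \<bar>(\<Sum>w\<in>UNIV. real_of_int (load M b x0 t1 w) * Mprod M (Suc t1) t2 w k)
          - (\<Sum>w\<in>UNIV. real_of_int (x0 w)) / real CARD('v)\<bar> \<ge> \<delta>}
     \<le> (if S = 0 then 0 else 2 * exp (- ((\<delta> - 1 / (2 * real CARD('v)))^2 / (4 * S))))"
proof -
  let ?eps = "1 / (2 * real CARD('v))"
  have "{b. \<bar>(\<Sum>w\<in>UNIV. real_of_int (load M b x0 t1 w) * Mprod M (Suc t1) t2 w k)
          - (\<Sum>w\<in>UNIV. real_of_int (x0 w)) / real CARD('v)\<bar> \<ge> \<delta>}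
      \<subseteq> {b. \<bar>mart t1 b - mart 0 b\<bar> \<ge> \<delta> - ?eps}"
    using mart_0_close_to_mean[OF smooth disc \<open>t1 \<le> t2\<close>] unfolding mart_def coeff_def by force
  then have "measure_pmf.prob (orient_pmf t1) {b. \<bar>(\<Sum>w\<in>UNIV. real_of_int (load M b x0 t1 w) * Mprod M (Suc t1) t2 w k)
          - (\<Sum>w\<in>UNIV. real_of_int (x0 w)) / real CARD('v)\<bar> \<ge> \<delta>}
      \<le> measure_pmf.prob (orient_pmf t1) {b. \<bar>mart t1 b - mart 0 b\<bar> \<ge> \<delta> - ?eps}"
    by (intro measure_pmf.finite_measure_mono) auto
  also have "\<dots> \<le> (if S = 0 then 0 else 2 * exp (- ((\<delta> - ?eps)^2 / (4 * S))))"
    using \<open>\<delta> > 1 / real CARD('v)\<close> mgf_mart_le_coeff_dev[OF \<open>t1 \<le> t2\<close>, of _ "1 / real CARD('v)"]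
    unfolding S_def coeff_dev_def coeff_def
    by (intro prob_abs_ge_le_subgaussian finite_set_orient_pmf) (auto intro: sum_nonneg simp: field_simps)
  finally show ?thesis .
qed

end

lemma load_tail:
  fixes M :: "nat \<Rightarrow> ('v::finite \<times> 'v) set" and K :: real
  assumes "\<And>t. is_matching E (M t)"
    and smooth: "smoothing M K (1 / (2 * real CARD('v))) 0 t1"
    and disc: "discrepancy (\<lambda>w. real_of_int (x0 w)) \<le> K"
    and "\<delta> > 1 / real CARD('v)"
  shows "measure_pmf.prob (orient_pmf t1)
     {b. \<bar>real_of_int (load M b x0 t1 w) - (\<Sum>w\<in>UNIV. real_of_int (x0 w)) / real CARD('v)\<bar> \<ge> \<delta>}
     \<le> 2 * exp (- ((\<delta> - 1 / (2 * real CARD('v)))^2 / 4))"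
proof -
  interpret load_martingale E M t1 w x0 by unfold_locales fact
  define S where "S = 1 - 1 / real CARD('v)"
  define a where "a = \<delta> - 1 / (2 * real CARD('v))"
  have "measure_pmf.prob (orient_pmf t1)
      {b. \<bar>real_of_int (load M b x0 t1 w) - (\<Sum>w\<in>UNIV. real_of_int (x0 w)) / real CARD('v)\<bar> \<ge> \<delta>}
      \<le> (if S = 0 then 0 else 2 * exp (- (a^2 / (4 * S))))"
    using load_weighted_tail[OF smooth disc order_refl \<open>\<delta> > _\<close>]
    unfolding Mprod_empty sum_idm_minus_mean_sq S_def a_def
    by (simp add: idm_def if_distrib cong: if_cong)
  also have "\<dots> \<le> 2 * exp (- (a^2 / 4))"
  proof (cases "S = 0")
    case False
    moreover have "S \<ge> 0" "S \<le> 1" unfolding S_def by (auto simp: field_simps)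
    ultimately have "a^2 / 4 \<le> a^2 / (4 * S)"
      by (intro divide_left_mono) (auto simp: field_simps)
    then show ?thesis using False by simp
  qed simp
  finally show ?thesis unfolding a_def .
qed

theorem lemma2p13:
  fixes E :: "('v::finite \<times> 'v) set"
    and M :: "nat \<Rightarrow> ('v \<times> 'v) set"
    and x0 :: "'v \<Rightarrow> int"
    and K :: real and t1 t2 :: nat
  assumes "is_graph E"
    and "\<And>t. is_matching E (M t)"
    and "discrepancy (\<lambda>w. real_of_int (x0 w)) \<le> K"
    and "t1 \<le> t2"
    and "smoothing M K (1 / (2 * real CARD('v))) 0 t1"
  defines "n \<equiv> real CARD('v)"
    and "xbar \<equiv> (\<Sum>w\<in>UNIV. real_of_int (x0 w)) / real CARD('v)"
  shows "(\<forall>k \<delta>. \<delta> > 1 / n \<longrightarrow>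
            (let S = (\<Sum>w\<in>UNIV. (Mprod M (Suc t1) t2 w k - 1 / n)^2) in
             measure_pmf.prob (orient_pmf t1)
               {b. \<bar>(\<Sum>w\<in>UNIV. real_of_int (load M b x0 t1 w) * Mprod M (Suc t1) t2 w k) - xbar\<bar> \<ge> \<delta>}
             \<le> (if S = 0 then 0 else 2 * exp (- ((\<delta> - 1 / (2 * n))^2 / (4 * S))))))
      \<and> (\<forall>w \<delta>. \<delta> > 1 / n \<longrightarrow>
             measure_pmf.prob (orient_pmf t1)
               {b. \<bar>real_of_int (load M b x0 t1 w) - xbar\<bar> \<ge> \<delta>}
             \<le> 2 * exp (- ((\<delta> - 1 / (2 * n))^2 / 4)))"
proof (intro conjI allI impI)
  fix k :: 'v and \<delta> :: real
  assume "\<delta> > 1 / n"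
  interpret load_martingale E M t2 k x0 by unfold_locales fact
  show "let S = (\<Sum>w\<in>UNIV. (Mprod M (Suc t1) t2 w k - 1 / n)^2) in
      measure_pmf.prob (orient_pmf t1)
        {b. \<bar>(\<Sum>w\<in>UNIV. real_of_int (load M b x0 t1 w) * Mprod M (Suc t1) t2 w k) - xbar\<bar> \<ge> \<delta>}
      \<le> (if S = 0 then 0 else 2 * exp (- ((\<delta> - 1 / (2 * n))^2 / (4 * S))))"
    using load_weighted_tail[OF assms(5,3,4)] \<open>\<delta> > 1 / n\<close> unfolding n_def xbar_def Let_def by simp
next
  fix w :: 'v and \<delta> :: real
  assume "\<delta> > 1 / n"
  then show "measure_pmf.prob (orient_pmf t1) {b. \<bar>real_of_int (load M b x0 t1 w) - xbar\<bar> \<ge> \<delta>}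
      \<le> 2 * exp (- ((\<delta> - 1 / (2 * n))^2 / 4))"
    using load_tail[OF assms(2,5,3)] unfolding n_def xbar_def by simp
qed

end
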